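(* Let $(E,\mathcal{I}_1),\dots,(E,\mathcal{I}_k)$ be matroids on a common finite ground set $E$ with $|E|=\sum_{i\in[k]}\mathrm{rank}(\mathcal{I}_i)$, let $w_i:E\to\mathbb{R}_+$ be weights, and let $\mathrm{Op}^{(1)},\mathrm{Op}^{(2)}\in\{\max,\min,\sum\}$. Let $w^{\max}=\max_{i\in[k]}\max_{e\in E}w_i(e)$, define $\widetilde{\min}=\max$, $\widetilde{\max}=\min$, $\widetilde{\sum}=\sum$, and define $w_i'(e)=\frac{|E|}{\mathrm{rank}(\mathcal{I}_i)}w^{\max}-w_i(e)$ if $\mathrm{Op}^{(1)}\in\{\min,\max\}$ and $\mathrm{Op}^{(2)}=\sum$, and $w_i'(e)=w^{\max}-w_i(e)$ otherwise. Then a feasible partition $(I_1,\dots,I_k)$ of $E$ is an optimal solution of the minimum $(\mathrm{Op}^{(1)},\mathrm{Op}^{(2)})$-value matroid partitioning problem for $(E,(\mathcal{I}_i,w_i)_{i\in[k]})$ if and only if it is an optimal solution of the maximum $(\widetilde{\mathrm{Op}^{(1)}},\widetilde{\mathrm{Op}^{(2)}})$-value matroid partitioning problem for $(E,(\mathcal{I}_i,w_i')_{i\in[k]})$.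
   Context: A feasible partition of $E$ with respect to matroids $(E,\mathcal{I}_i)$, $i\in[k]$, is a tuple $(I_1,\dots,I_k)$ of pairwise disjoint nonempty sets with $\bigcup_i I_i=E$ and $I_i\in\mathcal{I}_i$. The $(\mathrm{Op}^{(1)},\mathrm{Op}^{(2)})$-value of $(I_1,\dots,I_k)$ is $\mathrm{Op}^{(1)}_{i\in[k]}\mathrm{Op}^{(2)}_{e\in I_i}w_i(e)$. The minimum (resp. maximum) $(\mathrm{Op}^{(1)},\mathrm{Op}^{(2)})$-value matroid partitioning problem asks for a feasible partition minimizing (resp. maximizing) this value. Under $|E|=\sum_i\mathrm{rank}(\mathcal{I}_i)$ every feasible partition consists of bases. *)

theory Defs
  imports Complex_Main
begin

definition matroid :: "'a set \<Rightarrow> ('a set \<Rightarrow> bool) \<Rightarrow> bool" where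
  "matroid E indep \<longleftrightarrow> finite E
     \<and> (\<forall>X. indep X \<longrightarrow> X \<subseteq> E)
     \<and> indep {}
     \<and> (\<forall>X Y. indep X \<and> Y \<subseteq> X \<longrightarrow> indep Y)
     \<and> (\<forall>X Y. indep X \<and> indep Y \<and> card X < card Y \<longrightarrow> (\<exists>e\<in>Y - X. indep (insert e X)))"

definition mrank :: "('a set \<Rightarrow> bool) \<Rightarrow> nat" where
  "mrank indep = Max {card X | X. indep X}"

datatype op = OMax | OMin | OSum

fun apply_op :: "op \<Rightarrow> 'b set \<Rightarrow> ('b \<Rightarrow> real) \<Rightarrow> real" where
  "apply_op OMax A f = Max (f ` A)"
| "apply_op OMin A f = Min (f ` A)"
| "apply_op OSum A f = sum f A"

fun op_tilde :: "op \<Rightarrow> op" where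
  "op_tilde OMin = OMax"
| "op_tilde OMax = OMin"
| "op_tilde OSum = OSum"

text \<open>Feasible partition of E w.r.t. matroids indexed by [k] = {0..<k}.\<close>
definition feasible_partition ::
  "nat \<Rightarrow> 'a set \<Rightarrow> (nat \<Rightarrow> 'a set \<Rightarrow> bool) \<Rightarrow> (nat \<Rightarrow> 'a set) \<Rightarrow> bool" where
  "feasible_partition k E indep I \<longleftrightarrow>
     (\<forall>i<k. \<forall>j<k. i \<noteq> j \<longrightarrow> I i \<inter> I j = {})
     \<and> (\<forall>i<k. I i \<noteq> {})
     \<and> (\<Union>i<k. I i) = E
     \<and> (\<forall>i<k. indep i (I i))"

definition part_value ::
  "op \<Rightarrow> op \<Rightarrow> nat \<Rightarrow> (nat \<Rightarrow> 'a \<Rightarrow> real) \<Rightarrow> (nat \<Rightarrow> 'a set) \<Rightarrow> real" where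
  "part_value op1 op2 k w I = apply_op op1 {..<k} (\<lambda>i. apply_op op2 (I i) (w i))"

definition min_optimal ::
  "op \<Rightarrow> op \<Rightarrow> nat \<Rightarrow> 'a set \<Rightarrow> (nat \<Rightarrow> 'a set \<Rightarrow> bool) \<Rightarrow> (nat \<Rightarrow> 'a \<Rightarrow> real)
     \<Rightarrow> (nat \<Rightarrow> 'a set) \<Rightarrow> bool" where
  "min_optimal op1 op2 k E indep w I \<longleftrightarrow> feasible_partition k E indep I
     \<and> (\<forall>J. feasible_partition k E indep J \<longrightarrow> part_value op1 op2 k w I \<le> part_value op1 op2 k w J)"

definition max_optimal ::
  "op \<Rightarrow> op \<Rightarrow> nat \<Rightarrow> 'a set \<Rightarrow> (nat \<Rightarrow> 'a set \<Rightarrow> bool) \<Rightarrow> (nat \<Rightarrow> 'a \<Rightarrow> real)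
     \<Rightarrow> (nat \<Rightarrow> 'a set) \<Rightarrow> bool" where
  "max_optimal op1 op2 k E indep w I \<longleftrightarrow> feasible_partition k E indep I
     \<and> (\<forall>J. feasible_partition k E indep J \<longrightarrow> part_value op1 op2 k w J \<le> part_value op1 op2 k w I)"

end

theory Submission
  imports Defs
begin

text \<open>Since \<open>|E|\<close> is the sum of the ranks, every feasible partition consists of bases, so
  its \<open>i\<close>-th block has exactly \<open>rank(\<I>\<^sub>i)\<close> elements. Writing \<open>w'\<^sub>i = d\<^sub>i - w\<^sub>i\<close>, the
  transformed inner value is therefore a block constant minus the original inner value (max and
  min trade places), and the choice of \<open>d\<^sub>i\<close> makes these constants equal whenever the outer
  operation is max or min. So the transformed objective is \<open>C - \<close>(original objective) for a
  constant \<open>C\<close> independent of the partition.\<close>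

lemma card_le_mrank:
  assumes "matroid E indep" "indep X"
  shows "card X \<le> mrank indep"
proof -
  have "{card X | X. indep X} \<subseteq> card ` Pow E"
    using assms(1) unfolding matroid_def by auto
  then have "finite {card X | X. indep X}"
    using assms(1) unfolding matroid_def by (simp add: finite_subset)
  then show ?thesis unfolding mrank_def using assms(2) by (intro Max_ge) auto
qed

lemma feasible_partition_card_eq_mrank:
  assumes fin: "finite E"
    and mat: "\<And>i. i < k \<Longrightarrow> matroid E (indep i)"
    and card_E: "card E = (\<Sum>i<k. mrank (indep i))"
    and fp: "feasible_partition k E indep J" and "i < k"
  shows "card (J i) = mrank (indep i)"
proof -
  have disj: "\<forall>i<k. \<forall>j<k. i \<noteq> j \<longrightarrow> J i \<inter> J j = {}" and un: "(\<Union>i<k. J i) = E"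
    and ind: "\<forall>i<k. indep i (J i)"
    using fp unfolding feasible_partition_def by auto
  have finJ: "finite (J i)" if "i < k" for i
    using that un finite_subset[OF _ fin] by blast
  have le: "card (J i) \<le> mrank (indep i)" if "i < k" for i
    using card_le_mrank[OF mat] ind that by blast
  have "card E = (\<Sum>i<k. card (J i))"
    unfolding un[symmetric] using finJ disj by (intro card_UN_disjoint) auto
  then have sum_eq: "(\<Sum>i<k. card (J i)) = (\<Sum>i<k. mrank (indep i))"
    using card_E by simp
  show ?thesis
  proof (rule ccontr)
    assume "card (J i) \<noteq> mrank (indep i)"
    with le \<open>i < k\<close> have "card (J i) < mrank (indep i)" by (simp add: order_less_le)
    then have "(\<Sum>i<k. card (J i)) < (\<Sum>i<k. mrank (indep i))"
      using le \<open>i < k\<close> by (intro sum_strict_mono_ex1) auto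
    with sum_eq show False by simp
  qed
qed

lemma Min_const_minus:
  fixes f :: "'a \<Rightarrow> 'b::linordered_ab_group_add"
  assumes "finite A" "A \<noteq> {}"
  shows "Min ((\<lambda>x. c - f x) ` A) = c - Max (f ` A)"
proof (rule Min_eqI)
  show "finite ((\<lambda>x. c - f x) ` A)" using assms by simp
  show "c - Max (f ` A) \<le> y" if "y \<in> (\<lambda>x. c - f x) ` A" for y
    using that assms by auto
  have "Max (f ` A) \<in> f ` A" using assms by simp
  then show "c - Max (f ` A) \<in> (\<lambda>x. c - f x) ` A" by auto
qed

lemma Max_const_minus:
  fixes f :: "'a \<Rightarrow> 'b::linordered_ab_group_add"
  assumes "finite A" "A \<noteq> {}"
  shows "Max ((\<lambda>x. c - f x) ` A) = c - Min (f ` A)"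
proof (rule Max_eqI)
  show "finite ((\<lambda>x. c - f x) ` A)" using assms by simp
  show "y \<le> c - Min (f ` A)" if "y \<in> (\<lambda>x. c - f x) ` A" for y
    using that assms by auto
  have "Min (f ` A) \<in> f ` A" using assms by simp
  then show "c - Min (f ` A) \<in> (\<lambda>x. c - f x) ` A" by auto
qed

lemma apply_op_tilde_const_minus:
  assumes "finite A" "A \<noteq> {}"
  shows "apply_op (op_tilde op) A (\<lambda>x. c - f x)
           = (if op = OSum then real (card A) * c else c) - apply_op op A f"
  using assms by (cases op) (simp_all add: Min_const_minus Max_const_minus sum_subtractf)

lemma part_value_tilde_shift:
  assumes "k > 0"
    and fin: "\<And>i. i < k \<Longrightarrow> finite (J i)" and ne: "\<And>i. i < k \<Longrightarrow> J i \<noteq> {}"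
    and const: "\<And>i. i < k \<Longrightarrow> op1 \<noteq> OSum
                   \<Longrightarrow> (if op2 = OSum then real (card (J i)) * d i else d i) = c"
  shows "part_value (op_tilde op1) (op_tilde op2) k (\<lambda>i e. d i - w i e) J
           = (if op1 = OSum then (\<Sum>i<k. if op2 = OSum then real (card (J i)) * d i else d i)
              else c)
             - part_value op1 op2 k w J"
proof -
  let ?g = "\<lambda>i. apply_op op2 (J i) (w i)"
  define s where "s i = (if op2 = OSum then real (card (J i)) * d i else d i)" for i
  have inner: "apply_op (op_tilde op2) (J i) (\<lambda>e. d i - w i e) = s i - ?g i" if "i < k" for i
    using apply_op_tilde_const_minus[OF fin ne, OF that that] by (simp add: s_def)
  have "part_value (op_tilde op1) (op_tilde op2) k (\<lambda>i e. d i - w i e) J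
          = apply_op (op_tilde op1) {..<k} (\<lambda>i. s i - ?g i)"
    unfolding part_value_def using inner
    by (cases "op_tilde op1") (auto intro!: image_cong sum.cong)
  also have "\<dots> = (if op1 = OSum then sum s {..<k} else c) - apply_op op1 {..<k} ?g"
  proof (cases "op1 = OSum")
    case True
    then show ?thesis by (simp add: sum_subtractf)
  next
    case False
    then have "apply_op (op_tilde op1) {..<k} (\<lambda>i. s i - ?g i)
                 = apply_op (op_tilde op1) {..<k} (\<lambda>i. c - ?g i)"
      using const by (cases op1) (auto simp: s_def intro!: image_cong)
    also have "\<dots> = c - apply_op op1 {..<k} ?g"
      using apply_op_tilde_const_minus[of "{..<k}" op1 c ?g] False \<open>k > 0\<close>
      by (simp add: lessThan_empty_iff)
    finally show ?thesis using False by simp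
  qed
  finally show ?thesis by (simp add: s_def part_value_def)
qed

lemma part_value_lessThan_0:
  "part_value op1 op2 0 w J = apply_op op1 ({} :: nat set) (\<lambda>_. 0)"
  by (cases op1) (simp_all add: part_value_def)

lemma min_optimal_iff_max_optimal_of_shift:
  assumes "\<And>J. feasible_partition k E indep J
             \<Longrightarrow> part_value op1' op2' k w' J = C - part_value op1 op2 k w J"
  shows "min_optimal op1 op2 k E indep w I \<longleftrightarrow> max_optimal op1' op2' k E indep w' I"
  unfolding min_optimal_def max_optimal_def using assms by force

theorem mainTheorem2:
  fixes E :: "'a set" and k :: nat
    and indep :: "nat \<Rightarrow> 'a set \<Rightarrow> bool"
    and w :: "nat \<Rightarrow> 'a \<Rightarrow> real"
    and op1 op2 :: op
    and I :: "nat \<Rightarrow> 'a set"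
  assumes fin: "finite E"
    and mat: "\<And>i. i < k \<Longrightarrow> matroid E (indep i)"
    and card_E: "card E = (\<Sum>i<k. mrank (indep i))"
    and w_nonneg: "\<And>i e. i < k \<Longrightarrow> e \<in> E \<Longrightarrow> w i e \<ge> 0"
  defines "wmax \<equiv> Max {w i e | i e. i < k \<and> e \<in> E}"
  defines "w' \<equiv> (\<lambda>i e. if op1 \<in> {OMin, OMax} \<and> op2 = OSum
                         then real (card E) / real (mrank (indep i)) * wmax - w i e
                         else wmax - w i e)"
  shows "min_optimal op1 op2 k E indep w I \<longleftrightarrow>
         max_optimal (op_tilde op1) (op_tilde op2) k E indep w' I"
proof (cases "k = 0")
  case True
  \<comment> \<open>With no blocks both objectives are constant (\<open>Max {}\<close>, \<open>Min {}\<close> or \<open>0\<close>).\<close>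
  then show ?thesis
    unfolding min_optimal_def max_optimal_def by (simp add: part_value_lessThan_0)
next
  case False
  \<comment> \<open>Neither \<open>w_nonneg\<close> nor the value of \<open>wmax\<close> matters: any shift constant works.\<close>
  define d where "d i = (if op1 \<in> {OMin, OMax} \<and> op2 = OSum
                         then real (card E) / real (mrank (indep i)) * wmax else wmax)" for i
  have w': "w' = (\<lambda>i e. d i - w i e)" by (auto simp: w'_def d_def)
  define c where "c = (if op2 = OSum then real (card E) * wmax else wmax)"
  define C where "C = (if op1 = OSum
      then (\<Sum>i<k. if op2 = OSum then real (mrank (indep i)) * d i else d i) else c)"
  show ?thesis
  proof (rule min_optimal_iff_max_optimal_of_shift)
    fix J assume fp: "feasible_partition k E indep J"
    have card_J: "card (J i) = mrank (indep i)" if "i < k" for i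
      using feasible_partition_card_eq_mrank[OF fin mat card_E fp that] .
    have ne: "J i \<noteq> {}" and finJ: "finite (J i)" if "i < k" for i
      using fp that fin unfolding feasible_partition_def by (auto intro: finite_subset)
    have const: "(if op2 = OSum then real (card (J i)) * d i else d i) = c"
      if "i < k" "op1 \<noteq> OSum" for i
    proof -
      have "mrank (indep i) \<noteq> 0"
        using card_J[OF \<open>i < k\<close>] ne[OF \<open>i < k\<close>] finJ[OF \<open>i < k\<close>] by auto
      then show ?thesis
        using card_J[OF \<open>i < k\<close>] \<open>op1 \<noteq> OSum\<close> by (cases op1) (auto simp: d_def c_def)
    qed
    have "(\<Sum>i<k. if op2 = OSum then real (card (J i)) * d i else d i)
            = (\<Sum>i<k. if op2 = OSum then real (mrank (indep i)) * d i else d i)"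
      by (rule sum.cong) (simp_all add: card_J)
    then show "part_value (op_tilde op1) (op_tilde op2) k w' J = C - part_value op1 op2 k w J"
      using part_value_tilde_shift[where J = J and d = d and c = c and w = w] False finJ ne const
      by (simp add: w' C_def)
  qed
qed

end
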